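(* Let $\lambda,\mu>0$, let $N\ge M\ge1$ be integers, let $0<\nu<1$, and let $\{\mathcal{N}^{\nu}(t)\}_{t\ge0}$ be the fractional binomial process with birth rate $\lambda$, death rate $\mu$, maximal population $N$ and initial population $M$. Put $\xi=\lambda/(\lambda+\mu)$. Then for $0<s<t$, $$\mathbb{E}[\mathcal{N}^{\nu}(s)\mathcal{N}^{\nu}(t)]=(N\xi)^{2}-N\xi(\xi-1)\,E_{\nu}\big(-(\lambda+\mu)(t-s)^{\nu}\big).$$
   Context: $E_\nu(z)=\sum_{r\ge0}z^r/\Gamma(\nu r+1)$ is the Mittag-Leffler function. For $\nu\in(0,1)$, $\frac{d^\nu}{dt^\nu}$ denotes the Caputo fractional derivative. The fractional binomial process takes values in $\{0,\dots,N\}$, and its state probabilities $p_n^\nu(t)=\mathbb{P}(\mathcal{N}^\nu(t)=n)$ solve $$\frac{d^{\nu}}{dt^{\nu}}p_{n}^{\nu}(t)=\mu(n+1)p_{n+1}^{\nu}(t)-\mu np_{n}^{\nu}(t)-\lambda(N-n)p_{n}^{\nu}(t)+\lambda(N-n+1)p_{n-1}^{\nu}(t),\quad 0\le n\le N,$$ with $p_n^\nu(0)=\mathbf 1_{\{n=M\}}$. Conditionally on $\mathcal{N}^\nu(s)=n$, the law of $\mathcal{N}^\nu(s+r)$ is that of the process with the same parameters started from initial population $n$ and evaluated at time $r$; and $\mathbb{P}(\mathcal{N}^\nu(s)=n)$ is taken to be the binomial limit $P_n=\binom{N}{n}\xi^n(1-\xi)^{N-n}$ (the paper computes the mixed moment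 through the stationary joint generating function $Q^\nu(u,u';t-s)=\sum_{n=0}^N(1-u)^nP_nQ^\nu_n(u',t-s)$). *)

theory Defs
  imports "HOL-Analysis.Analysis"
begin

definition mittag_leffler :: "real \<Rightarrow> real \<Rightarrow> real" where
  "mittag_leffler \<nu> z = (\<Sum>r. z ^ r / Gamma (\<nu> * real r + 1))"

definition has_caputo_derivative :: "real \<Rightarrow> (real \<Rightarrow> real) \<Rightarrow> real \<Rightarrow> real \<Rightarrow> bool" where
  "has_caputo_derivative \<nu> f D t \<longleftrightarrow>
     continuous_on {0..t} f \<and> (\<forall>\<tau>\<in>{0<..<t}. f differentiable (at \<tau>)) \<and>
     ((\<lambda>\<tau>. deriv f \<tau> * (t - \<tau>) powr (- \<nu>) / Gamma (1 - \<nu>)) has_integral D) {0..t}"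

definition fbp_rhs :: "real \<Rightarrow> real \<Rightarrow> nat \<Rightarrow> (nat \<Rightarrow> real \<Rightarrow> real) \<Rightarrow> nat \<Rightarrow> real \<Rightarrow> real" where
  "fbp_rhs lam mu N p n t =
     (if n < N then mu * real (n + 1) * p (n + 1) t else 0)
     - mu * real n * p n t
     - lam * real (N - n) * p n t
     + (if 0 < n then lam * real (N - n + 1) * p (n - 1) t else 0)"

definition fbp_state_probs ::
  "real \<Rightarrow> real \<Rightarrow> nat \<Rightarrow> real \<Rightarrow> nat \<Rightarrow> (nat \<Rightarrow> real \<Rightarrow> real) \<Rightarrow> bool" where
  "fbp_state_probs lam mu N \<nu> m p \<longleftrightarrow>
     (\<forall>n\<le>N. p n 0 = (if n = m then 1 else 0)) \<and>
     (\<forall>n\<le>N. \<forall>t>0. has_caputo_derivative \<nu> (p n) (fbp_rhs lam mu N p n t) t)"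

definition binom_limit :: "nat \<Rightarrow> real \<Rightarrow> nat \<Rightarrow> real" where
  "binom_limit N \<xi> n = real (N choose n) * \<xi> ^ n * (1 - \<xi>) ^ (N - n)"

text \<open>Mixed moment E[N(s) N(t)] computed as in the paper: P(N(s)=n) is the binomial
  limit P_n, and conditionally on N(s)=n, N(t) is distributed as the process started
  from n evaluated at time t - s.  P0 n is the state-probability family of the
  process started from initial population n.\<close>
definition fbp_mixed_moment ::
  "nat \<Rightarrow> real \<Rightarrow> (nat \<Rightarrow> nat \<Rightarrow> real \<Rightarrow> real) \<Rightarrow> real \<Rightarrow> real \<Rightarrow> real" where
  "fbp_mixed_moment N \<xi> P0 s t =
     (\<Sum>n\<le>N. \<Sum>k\<le>N. real n * real k * binom_limit N \<xi> n * P0 n k (t - s))"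

end

theory Submission
  imports Defs
begin

(* Conditionally on N(s) = n, the expectation of N(t) is the mean m_n(t - s) of the process
   started from n.  Weighting the forward equations by n and summing (total mass being
   conserved) gives the fractional relaxation equation D^nu m_n = lam N - (lam + mu) m_n with
   m_n(0) = n.  Since E_nu(-a r^nu) has Caputo derivative -a E_nu(-a r^nu) (termwise, through
   Beta integrals and dominated convergence) and such equations have unique solutions by the
   extremum principle for Caputo derivatives, m_n(r) = N xi + (n - N xi) E_nu(-(lam + mu) r^nu).
   Averaging over the binomial law of N(s), with moments N xi and N xi (1 - xi) + (N xi)^2,
   gives the formula. *)

section \<open>The Mittag-Leffler series\<close>

lemma power_div_fact_le_exp:
  fixes x :: real
  assumes "0 \<le> x"
  shows "x ^ n / fact n \<le> exp x"
proof -
  have "(\<Sum>k\<in>{n}. x ^ k /\<^sub>R fact k) \<le> (\<Sum>k. x ^ k /\<^sub>R fact k)"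
    using assms summable_exp_generic[of x] by (intro sum_le_suminf) auto
  then show ?thesis by (simp add: exp_def divide_inverse ac_simps)
qed

lemma fact_le_Gamma:
  assumes "1 \<le> n" "real n + 1 \<le> x"
  shows "fact n \<le> Gamma x"
proof -
  have "fact n = Gamma (real n + 1)"
    using Gamma_fact[where 'a=real, of n] by (simp add: add.commute)
  also have "\<dots> \<le> Gamma x"
    using assms Gamma_real_strict_mono[of "real n + 1" x] by (cases "real n + 1 = x") auto
  finally show ?thesis .
qed

lemma powr_le_exp_mult_Gamma:
  fixes B x :: real
  assumes "1 \<le> B" "3 \<le> x"
  shows "B powr (x - 2) \<le> exp B * Gamma (x + 1)"
proof -
  define m where "m = nat \<lfloor>x\<rfloor> - 1"
  have m: "1 \<le> m" "real m = of_int \<lfloor>x\<rfloor> - 1"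
    using assms(2) unfolding m_def by linarith+
  have "B powr (x - 2) \<le> B powr real m"
    using assms m by (intro powr_mono) linarith+
  also have "\<dots> = B ^ m"
    using assms by (simp add: powr_realpow)
  also have "\<dots> \<le> exp B * fact m"
    using power_div_fact_le_exp[of B m] assms by (simp add: divide_le_eq)
  also have "\<dots> \<le> exp B * Gamma (x + 1)"
  proof -
    have "fact m \<le> Gamma (x + 1)"
      using m of_int_floor_le[of x] by (intro fact_le_Gamma) linarith+
    then show ?thesis by simp
  qed
  finally show ?thesis .
qed

lemma summable_mittag_leffler_nonneg:
  fixes \<nu> R :: real
  assumes "0 < \<nu>" "0 \<le> R"
  shows "summable (\<lambda>k. R ^ k / Gamma (\<nu> * real k + 1))"
proof (rule summable_comparison_test')
  define B where "B = (2 * R + 1) powr (1 / \<nu>)"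
  have B: "1 \<le> B" "B powr \<nu> = 2 * R + 1"
    using assms unfolding B_def by (auto intro: ge_one_powr_ge_zero simp: powr_powr)
  show "summable (\<lambda>k. B\<^sup>2 * exp B * (1/2::real) ^ k)"
    by (intro summable_mult summable_geometric) auto
  fix k :: nat
  assume "nat \<lceil>3 / \<nu>\<rceil> \<le> k"
  then have "3 / \<nu> \<le> real k" by linarith
  then have k: "3 \<le> \<nu> * real k" using assms by (simp add: field_simps)
  have "(2 * R + 1) ^ k = (B powr \<nu>) ^ k"
    using B by simp
  also have "\<dots> = B powr (\<nu> * real k - 2 + 2)"
    using B powr_power[of B \<nu> k] by (simp add: ac_simps)
  also have "\<dots> = B powr (\<nu> * real k - 2) * B\<^sup>2"
    using B powr_realpow[of B 2] by (simp only: powr_add) simp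
  also have "\<dots> \<le> exp B * Gamma (\<nu> * real k + 1) * B\<^sup>2"
    using B k by (intro mult_right_mono powr_le_exp_mult_Gamma) auto
  finally have bound: "(2 * R + 1) ^ k \<le> B\<^sup>2 * exp B * Gamma (\<nu> * real k + 1)"
    by (simp add: mult_ac)
  have "R ^ k \<le> (2 * R + 1) ^ k * (1/2) ^ k"
    using assms by (simp add: power_mult_distrib[symmetric] power_mono)
  also have "\<dots> \<le> B\<^sup>2 * exp B * Gamma (\<nu> * real k + 1) * (1/2) ^ k"
    using bound by (intro mult_right_mono) auto
  finally show "norm (R ^ k / Gamma (\<nu> * real k + 1)) \<le> B\<^sup>2 * exp B * (1/2) ^ k"
    using assms k Gamma_real_pos[of "\<nu> * real k + 1"]
    by (simp add: divide_le_eq mult_ac)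
qed

definition ml_coeff :: "real \<Rightarrow> nat \<Rightarrow> real" where
  "ml_coeff \<nu> k = 1 / Gamma (\<nu> * real k + 1)"

definition mittag_leffler_deriv :: "real \<Rightarrow> real \<Rightarrow> real" where
  "mittag_leffler_deriv \<nu> z = (\<Sum>k. diffs (ml_coeff \<nu>) k * z ^ k)"

lemma mittag_leffler_power_series: "mittag_leffler \<nu> z = (\<Sum>k. ml_coeff \<nu> k * z ^ k)"
  unfolding mittag_leffler_def ml_coeff_def by simp

lemma summable_ml_coeff:
  assumes "0 < \<nu>"
  shows "summable (\<lambda>k. ml_coeff \<nu> k * z ^ k)"
proof (rule summable_norm_cancel)
  have "0 < Gamma (\<nu> * real k + 1)" for k
    using assms by (intro Gamma_real_pos) (simp add: add_nonneg_pos)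
  then show "summable (\<lambda>k. norm (ml_coeff \<nu> k * z ^ k))"
    using summable_mittag_leffler_nonneg[OF assms, of "\<bar>z\<bar>"]
    by (simp add: ml_coeff_def abs_mult power_abs less_imp_le)
qed

lemma summable_diffs_ml_coeff:
  assumes "0 < \<nu>"
  shows "summable (\<lambda>k. diffs (ml_coeff \<nu>) k * z ^ k)"
  using summable_ml_coeff[OF assms] by (intro termdiff_converges_all) auto

lemma diffs_ml_coeff:
  assumes "0 < \<nu>"
  shows "diffs (ml_coeff \<nu>) k = 1 / (\<nu> * Gamma (\<nu> * real k + \<nu>))"
proof -
  define x where "x = \<nu> * real k + \<nu>"
  have x: "0 < x" "x = real (Suc k) * \<nu>" "\<nu> * real (Suc k) + 1 = x + 1"
    using assms by (simp_all add: x_def add_nonneg_pos) (simp_all add: algebra_simps)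
  have "diffs (ml_coeff \<nu>) k = real (Suc k) * (1 / Gamma (x + 1))"
    unfolding diffs_def ml_coeff_def x(3) ..
  also have "Gamma (x + 1) = x * Gamma x"
    using x(1) by (intro Gamma_plus1) (auto simp: nonpos_Ints_def)
  finally show ?thesis
    using x(2) by (simp flip: x_def)
qed

lemma has_real_derivative_mittag_leffler:
  assumes "0 < \<nu>"
  shows "(mittag_leffler \<nu> has_real_derivative mittag_leffler_deriv \<nu> z) (at z)"
  unfolding mittag_leffler_power_series[abs_def] mittag_leffler_deriv_def
  using summable_ml_coeff[OF assms] by (intro termdiffs_strong'[of "norm z + 1"]) auto

lemma continuous_on_mittag_leffler: "0 < \<nu> \<Longrightarrow> continuous_on A (mittag_leffler \<nu>)"
  using has_real_derivative_mittag_leffler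
  by (meson DERIV_isCont continuous_at_imp_continuous_on)

lemma mittag_leffler_0 [simp]: "mittag_leffler \<nu> 0 = 1"
proof -
  have "(\<Sum>k. ml_coeff \<nu> k * 0 ^ k) = ml_coeff \<nu> 0"
    by (subst suminf_finite[of "{0}"]) auto
  then show ?thesis by (simp add: mittag_leffler_power_series ml_coeff_def)
qed

section \<open>Caputo derivatives\<close>

lemma has_caputo_derivativeI:
  assumes "continuous_on {0..t} f"
    and "\<And>\<tau>. \<tau> \<in> {0<..<t} \<Longrightarrow> (f has_real_derivative f' \<tau>) (at \<tau>)"
    and "((\<lambda>\<tau>. f' \<tau> * (t - \<tau>) powr (- \<nu>) / Gamma (1 - \<nu>)) has_integral D) {0..t}"
  shows "has_caputo_derivative \<nu> f D t"
proof -
  have "((\<lambda>\<tau>. deriv f \<tau> * (t - \<tau>) powr (- \<nu>) / Gamma (1 - \<nu>)) has_integral D) {0..t}"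
    by (rule has_integral_spike_finite[where S = "{0, t}", OF _ _ assms(3)])
       (auto simp: DERIV_imp_deriv assms(2))
  with assms(1,2) show ?thesis
    unfolding has_caputo_derivative_def real_differentiable_def by blast
qed

lemma has_caputo_derivative_imp_DERIV:
  "has_caputo_derivative \<nu> f D t \<Longrightarrow> \<tau> \<in> {0<..<t} \<Longrightarrow>
     (f has_real_derivative deriv f \<tau>) (at \<tau>)"
  unfolding has_caputo_derivative_def by (simp add: DERIV_deriv_iff_real_differentiable)

lemma has_caputo_derivative_const: "has_caputo_derivative \<nu> (\<lambda>x. c) 0 t"
  unfolding has_caputo_derivative_def by auto

lemma has_caputo_derivative_add:
  assumes f: "has_caputo_derivative \<nu> f Df t" and g: "has_caputo_derivative \<nu> g Dg t"
  shows "has_caputo_derivative \<nu> (\<lambda>x. f x + g x) (Df + Dg) t"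
proof (rule has_caputo_derivativeI)
  show "continuous_on {0..t} (\<lambda>x. f x + g x)"
    using f g unfolding has_caputo_derivative_def by (intro continuous_on_add) auto
  show "((\<lambda>x. f x + g x) has_real_derivative deriv f \<tau> + deriv g \<tau>) (at \<tau>)"
    if "\<tau> \<in> {0<..<t}" for \<tau>
    using f g that by (intro DERIV_add has_caputo_derivative_imp_DERIV)
  have "((\<lambda>\<tau>. deriv f \<tau> * (t - \<tau>) powr (- \<nu>) / Gamma (1 - \<nu>)
            + deriv g \<tau> * (t - \<tau>) powr (- \<nu>) / Gamma (1 - \<nu>)) has_integral Df + Dg) {0..t}"
    using f g unfolding has_caputo_derivative_def by (intro has_integral_add) auto
  then show "((\<lambda>\<tau>. (deriv f \<tau> + deriv g \<tau>) * (t - \<tau>) powr (- \<nu>) / Gamma (1 - \<nu>))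
               has_integral Df + Dg) {0..t}"
    by (simp add: add_divide_distrib distrib_right)
qed

lemma has_caputo_derivative_cmult:
  assumes f: "has_caputo_derivative \<nu> f Df t"
  shows "has_caputo_derivative \<nu> (\<lambda>x. c * f x) (c * Df) t"
proof (rule has_caputo_derivativeI)
  show "continuous_on {0..t} (\<lambda>x. c * f x)"
    using f unfolding has_caputo_derivative_def by (intro continuous_on_mult_left) auto
  show "((\<lambda>x. c * f x) has_real_derivative c * deriv f \<tau>) (at \<tau>)" if "\<tau> \<in> {0<..<t}" for \<tau>
    using f that by (intro DERIV_cmult has_caputo_derivative_imp_DERIV)
  have "((\<lambda>\<tau>. c * (deriv f \<tau> * (t - \<tau>) powr (- \<nu>) / Gamma (1 - \<nu>))) has_integral c * Df) {0..t}"
    using f unfolding has_caputo_derivative_def by (intro has_integral_mult_right) auto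
  then show "((\<lambda>\<tau>. c * deriv f \<tau> * (t - \<tau>) powr (- \<nu>) / Gamma (1 - \<nu>)) has_integral c * Df) {0..t}"
    by (simp add: mult.assoc)
qed

lemma has_caputo_derivative_sum:
  assumes "finite A" "\<And>i. i \<in> A \<Longrightarrow> has_caputo_derivative \<nu> (f i) (D i) t"
  shows "has_caputo_derivative \<nu> (\<lambda>x. \<Sum>i\<in>A. f i x) (\<Sum>i\<in>A. D i) t"
  using assms
proof (induction A rule: finite_induct)
  case empty
  then show ?case using has_caputo_derivative_const[of \<nu> 0 t] by simp
next
  case (insert a A)
  then show ?case by (simp add: has_caputo_derivative_add)
qed

section \<open>The Caputo derivative of \<open>E\<^sub>\<nu>(-a t powr \<nu>)\<close>\<close>

lemma has_integral_Beta_interval: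
  fixes t A B :: real
  assumes "0 < t" "0 < A" "0 < B"
  shows "((\<lambda>x. x powr (A - 1) * (t - x) powr (B - 1)) has_integral
            t powr (A + B - 1) * Beta A B) {0..t}"
proof -
  define f where "f u = u powr (A - 1) * (1 - u) powr (B - 1)" for u :: real
  have "((\<lambda>x. f ((1/t) * x)) has_integral (1 / \<bar>1/t\<bar>) *\<^sub>R Beta A B) ((\<lambda>x. x / (1/t)) ` {0..1})"
    using has_integral_Beta_real[OF assms(2,3)] assms(1)
    by (intro has_integral_stretch_real) (auto simp: f_def)
  moreover have "(\<lambda>x. x / (1/t)) ` {0..1} = {0..t}"
    using assms(1) by (auto simp: image_iff intro!: bexI[where x="_ / t"])
  ultimately have "((\<lambda>x. f (x / t)) has_integral t * Beta A B) {0..t}"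
    using assms(1) by simp
  then have "((\<lambda>x. t powr (A + B - 2) * f (x / t)) has_integral t powr (A + B - 2) * (t * Beta A B)) {0..t}"
    by (rule has_integral_mult_right)
  moreover have "t powr (A + B - 2) * f (x / t) = x powr (A - 1) * (t - x) powr (B - 1)"
    if "x \<in> {0..t}" for x
  proof -
    have "1 - x / t = (t - x) / t" using assms(1) by (simp add: field_simps)
    then have "f (x / t) = x powr (A - 1) * (t - x) powr (B - 1) / (t powr (A - 1) * t powr (B - 1))"
      using that by (simp add: f_def powr_divide)
    moreover have "t powr (A - 1) * t powr (B - 1) = t powr (A + B - 2)"
      by (simp add: powr_add[symmetric])
    ultimately show ?thesis using assms(1) by simp
  qed
  moreover have "t powr (A + B - 2) * t = t powr (A + B - 1)"
    using assms(1) powr_add[of t "A + B - 2" 1] by simp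
  ultimately show ?thesis
    by (subst has_integral_cong[symmetric]) (auto simp: mult.assoc[symmetric])
qed

text \<open>Differentiating the series of \<open>E\<^sub>\<nu>(-a \<tau> powr \<nu>)\<close> termwise, the Caputo integrand
  of \<open>E\<^sub>\<nu>(-a t powr \<nu>)\<close> becomes the sum over \<open>k\<close> of these terms.\<close>

definition ml_caputo_term :: "real \<Rightarrow> real \<Rightarrow> real \<Rightarrow> nat \<Rightarrow> real \<Rightarrow> real" where
  "ml_caputo_term \<nu> a t k \<tau> =
     (- a) ^ (k + 1) / (Gamma (\<nu> * real k + \<nu>) * Gamma (1 - \<nu>))
       * (\<tau> powr (\<nu> * real k + \<nu> - 1) * (t - \<tau>) powr (- \<nu>))"

lemma Gamma_ml_exponent_pos: "0 < \<nu> \<Longrightarrow> 0 < Gamma (\<nu> * real k + \<nu>)"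
  by (intro Gamma_real_pos) (simp add: add_nonneg_pos)

lemma has_integral_ml_caputo_term:
  assumes "0 < \<nu>" "\<nu> < 1" "0 < t"
  shows "(ml_caputo_term \<nu> a t k has_integral - a * (ml_coeff \<nu> k * (- a * t powr \<nu>) ^ k)) {0..t}"
proof -
  define e where "e = \<nu> * real k + \<nu>"
  have e: "0 < e" "0 < Gamma e" "e + (1 - \<nu>) = \<nu> * real k + 1"
    using assms Gamma_ml_exponent_pos[of \<nu> k] by (simp_all add: e_def add_nonneg_pos)
  have "((\<lambda>\<tau>. \<tau> powr (e - 1) * (t - \<tau>) powr ((1 - \<nu>) - 1)) has_integral
          t powr (e + (1 - \<nu>) - 1) * Beta e (1 - \<nu>)) {0..t}"
    using assms e by (intro has_integral_Beta_interval) auto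
  then have "(ml_caputo_term \<nu> a t k has_integral
      (- a) ^ (k + 1) / (Gamma e * Gamma (1 - \<nu>)) * (t powr (e + (1 - \<nu>) - 1) * Beta e (1 - \<nu>))) {0..t}"
    unfolding ml_caputo_term_def e_def[symmetric] by (intro has_integral_mult_right) simp
  moreover have "(- a) ^ (k + 1) / (Gamma e * Gamma (1 - \<nu>)) * (t powr (e + (1 - \<nu>) - 1) * Beta e (1 - \<nu>))
      = - a * (ml_coeff \<nu> k * (- a * t powr \<nu>) ^ k)"
  proof -
    have "t powr (e + (1 - \<nu>) - 1) = (t powr \<nu>) ^ k"
      using assms powr_power[of t \<nu> k] by (simp add: e(3) mult.commute)
    moreover have "Beta e (1 - \<nu>) = Gamma e * Gamma (1 - \<nu>) / Gamma (\<nu> * real k + 1)"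
      unfolding Beta_def e(3) ..
    moreover have "0 < Gamma (\<nu> * real k + 1)" "0 < Gamma (1 - \<nu>)"
      using assms by (simp_all add: add_nonneg_pos)
    ultimately show ?thesis
      unfolding ml_coeff_def power_mult_distrib using e(2)
      by (simp add: power_add field_simps)
  qed
  ultimately show ?thesis by simp
qed

lemma ml_caputo_term_sums:
  assumes "0 < \<nu>" "0 \<le> \<tau>"
  shows "(\<lambda>k. ml_caputo_term \<nu> a t k \<tau>) sums
     (mittag_leffler_deriv \<nu> (- a * \<tau> powr \<nu>) * (- a * (\<nu> * \<tau> powr (\<nu> - 1)))
        * (t - \<tau>) powr (- \<nu>) / Gamma (1 - \<nu>))"
proof (cases "\<tau> = 0")
  case True
  \<comment> \<open>\<open>0 powr x = 0\<close>, so all terms and the claimed sum vanish\<close>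
  then show ?thesis by (simp add: ml_caputo_term_def)
next
  case False
  with assms have "0 < \<tau>" by simp
  define K where "K = - a * (\<nu> * \<tau> powr (\<nu> - 1)) * (t - \<tau>) powr (- \<nu>) / Gamma (1 - \<nu>)"
  have "(\<lambda>k. diffs (ml_coeff \<nu>) k * (- a * \<tau> powr \<nu>) ^ k * K) sums
          (mittag_leffler_deriv \<nu> (- a * \<tau> powr \<nu>) * K)"
    unfolding mittag_leffler_deriv_def
    by (intro sums_mult2 summable_sums summable_diffs_ml_coeff assms(1))
  moreover have "diffs (ml_coeff \<nu>) k * (- a * \<tau> powr \<nu>) ^ k * K = ml_caputo_term \<nu> a t k \<tau>" for k
  proof -
    have "\<tau> powr (\<nu> * real k + \<nu> - 1) = (\<tau> powr \<nu>) ^ k * \<tau> powr (\<nu> - 1)"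
      using \<open>0 < \<tau>\<close> powr_power[of \<tau> \<nu> k] by (simp add: powr_add[symmetric] algebra_simps)
    then show ?thesis
      unfolding power_mult_distrib using assms Gamma_ml_exponent_pos[of \<nu> k]
      by (simp add: diffs_ml_coeff ml_caputo_term_def K_def field_simps)
  qed
  ultimately show ?thesis by (simp add: K_def mult.assoc)
qed

lemma norm_ml_caputo_term_le:
  assumes "0 < \<nu>" "\<nu> < 1" "\<tau> \<in> {0..t}"
  shows "norm (ml_caputo_term \<nu> a t k \<tau>)
           \<le> \<bar>a\<bar> ^ (k + 1) * t powr (\<nu> * real k) / (Gamma (\<nu> * real k + \<nu>) * Gamma (1 - \<nu>))
               * (\<tau> powr (\<nu> - 1) * (t - \<tau>) powr (- \<nu>))"
proof -
  define c where "c = \<bar>a\<bar> ^ (k + 1) / (Gamma (\<nu> * real k + \<nu>) * Gamma (1 - \<nu>))"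
  have G: "0 < Gamma (\<nu> * real k + \<nu>)" "0 < Gamma (1 - \<nu>)"
    using assms Gamma_ml_exponent_pos[of \<nu> k] by simp_all
  then have "0 \<le> c"
    by (auto simp: c_def intro!: divide_nonneg_pos mult_pos_pos)
  have "\<tau> powr (\<nu> * real k + \<nu> - 1) = \<tau> powr (\<nu> * real k) * \<tau> powr (\<nu> - 1)"
    by (simp add: powr_add[symmetric] algebra_simps)
  also have "\<dots> \<le> t powr (\<nu> * real k) * \<tau> powr (\<nu> - 1)"
    using assms by (intro mult_right_mono powr_mono2) auto
  finally have "c * (\<tau> powr (\<nu> * real k + \<nu> - 1) * (t - \<tau>) powr (- \<nu>))
                  \<le> c * (t powr (\<nu> * real k) * \<tau> powr (\<nu> - 1) * (t - \<tau>) powr (- \<nu>))"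
    using \<open>0 \<le> c\<close> by (intro mult_left_mono mult_right_mono) auto
  moreover have "norm (ml_caputo_term \<nu> a t k \<tau>)
                   = c * (\<tau> powr (\<nu> * real k + \<nu> - 1) * (t - \<tau>) powr (- \<nu>))"
    using G by (simp add: ml_caputo_term_def c_def abs_mult power_abs)
  ultimately show ?thesis
    by (simp add: c_def mult_ac)
qed

lemma summable_ml_caputo_bound:
  assumes "0 < \<nu>" "\<nu> < 1" "0 < t"
  shows "summable (\<lambda>k. \<bar>a\<bar> ^ (k + 1) * t powr (\<nu> * real k)
                          / (Gamma (\<nu> * real k + \<nu>) * Gamma (1 - \<nu>)))"
proof -
  have "\<bar>a\<bar> ^ (k + 1) * t powr (\<nu> * real k) / (Gamma (\<nu> * real k + \<nu>) * Gamma (1 - \<nu>))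
          = \<bar>a\<bar> * \<nu> / Gamma (1 - \<nu>) * (diffs (ml_coeff \<nu>) k * (\<bar>a\<bar> * t powr \<nu>) ^ k)" for k
    using assms Gamma_ml_exponent_pos[of \<nu> k] powr_power[of t \<nu> k]
    by (simp add: diffs_ml_coeff field_simps)
  then show ?thesis
    by (simp add: summable_mult summable_diffs_ml_coeff assms(1))
qed

lemma ml_caputo_partial_sums_dominated:
  assumes "0 < \<nu>" "\<nu> < 1" "0 < t"
  obtains h where "h integrable_on {0..t}"
    and "\<And>n \<tau>. \<tau> \<in> {0..t} \<Longrightarrow> norm (\<Sum>k<n. ml_caputo_term \<nu> a t k \<tau>) \<le> h \<tau>"
proof -
  define d where "d k = \<bar>a\<bar> ^ (k + 1) * t powr (\<nu> * real k)
                          / (Gamma (\<nu> * real k + \<nu>) * Gamma (1 - \<nu>))" for k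
  define w where "w \<tau> = \<tau> powr (\<nu> - 1) * (t - \<tau>) powr (- \<nu>)" for \<tau>
  have "summable d"
    unfolding d_def using summable_ml_caputo_bound[OF assms] .
  have d_nonneg: "0 \<le> d k" for k
    using assms Gamma_ml_exponent_pos[of \<nu> k]
    by (auto simp: d_def intro!: divide_nonneg_pos mult_pos_pos)
  have "w integrable_on {0..t}"
    using has_integral_Beta_interval[of t \<nu> "1 - \<nu>"] assms
    by (auto simp: w_def[abs_def] integrable_on_def)
  show ?thesis
  proof (rule that)
    show "(\<lambda>\<tau>. suminf d * w \<tau>) integrable_on {0..t}"
      using \<open>w integrable_on {0..t}\<close> by (rule integrable_on_mult_right)
    fix n \<tau> assume \<tau>: "\<tau> \<in> {0..t}"
    have "norm (\<Sum>k<n. ml_caputo_term \<nu> a t k \<tau>) \<le> (\<Sum>k<n. d k * w \<tau>)"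
      using norm_ml_caputo_term_le[OF assms(1,2) \<tau>] unfolding d_def w_def
      by (intro sum_norm_le) auto
    also have "\<dots> = (\<Sum>k<n. d k) * w \<tau>"
      by (simp add: sum_distrib_right)
    also have "\<dots> \<le> suminf d * w \<tau>"
      using \<open>summable d\<close> d_nonneg by (intro mult_right_mono sum_le_suminf) (auto simp: w_def)
    finally show "norm (\<Sum>k<n. ml_caputo_term \<nu> a t k \<tau>) \<le> suminf d * w \<tau>" .
  qed
qed

lemma has_caputo_derivative_mittag_leffler:
  assumes "0 < \<nu>" "\<nu> < 1" "0 < t"
  shows "has_caputo_derivative \<nu> (\<lambda>r. mittag_leffler \<nu> (- a * r powr \<nu>))
           (- a * mittag_leffler \<nu> (- a * t powr \<nu>)) t"
proof (rule has_caputo_derivativeI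
    [where f' = "\<lambda>\<tau>. mittag_leffler_deriv \<nu> (- a * \<tau> powr \<nu>) * (- a * (\<nu> * \<tau> powr (\<nu> - 1)))"])
  have "continuous_on {0..t} (\<lambda>r. - a * r powr \<nu>)"
    using assms by (intro continuous_intros continuous_on_powr') auto
  then show "continuous_on {0..t} (\<lambda>r. mittag_leffler \<nu> (- a * r powr \<nu>))"
    by (rule continuous_on_compose2[OF continuous_on_mittag_leffler[OF assms(1)]]) auto
  show "((\<lambda>r. mittag_leffler \<nu> (- a * r powr \<nu>)) has_real_derivative
          mittag_leffler_deriv \<nu> (- a * \<tau> powr \<nu>) * (- a * (\<nu> * \<tau> powr (\<nu> - 1)))) (at \<tau>)"
    if "\<tau> \<in> {0<..<t}" for \<tau>
    using that has_real_derivative_powr[of \<tau> \<nu>]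
    by (intro DERIV_chain2[OF has_real_derivative_mittag_leffler[OF assms(1)]] DERIV_cmult) auto
  obtain h where h: "h integrable_on {0..t}"
    "\<And>n \<tau>. \<tau> \<in> {0..t} \<Longrightarrow> norm (\<Sum>k<n. ml_caputo_term \<nu> a t k \<tau>) \<le> h \<tau>"
    using ml_caputo_partial_sums_dominated[OF assms] by blast
  show "((\<lambda>\<tau>. mittag_leffler_deriv \<nu> (- a * \<tau> powr \<nu>) * (- a * (\<nu> * \<tau> powr (\<nu> - 1)))
            * (t - \<tau>) powr (- \<nu>) / Gamma (1 - \<nu>)) has_integral
          - a * mittag_leffler \<nu> (- a * t powr \<nu>)) {0..t}"
  proof (rule has_integral_dominated_convergence[OF _ h(1)])
    show "((\<lambda>\<tau>. \<Sum>k<n. ml_caputo_term \<nu> a t k \<tau>) has_integral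
            (\<Sum>k<n. - a * (ml_coeff \<nu> k * (- a * t powr \<nu>) ^ k))) {0..t}" for n
      by (intro has_integral_sum has_integral_ml_caputo_term assms) auto
    show "\<forall>\<tau>\<in>{0..t}. norm (\<Sum>k<n. ml_caputo_term \<nu> a t k \<tau>) \<le> h \<tau>" for n
      using h(2) by blast
    show "\<forall>\<tau>\<in>{0..t}. (\<lambda>n. \<Sum>k<n. ml_caputo_term \<nu> a t k \<tau>) \<longlonglongrightarrow>
            mittag_leffler_deriv \<nu> (- a * \<tau> powr \<nu>) * (- a * (\<nu> * \<tau> powr (\<nu> - 1)))
              * (t - \<tau>) powr (- \<nu>) / Gamma (1 - \<nu>)"
      using ml_caputo_term_sums[OF assms(1)] by (simp add: sums_def)
    have "(\<lambda>k. ml_coeff \<nu> k * (- a * t powr \<nu>) ^ k) sums mittag_leffler \<nu> (- a * t powr \<nu>)"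
      unfolding mittag_leffler_power_series by (intro summable_sums summable_ml_coeff assms(1))
    then show "(\<lambda>n. \<Sum>k<n. - a * (ml_coeff \<nu> k * (- a * t powr \<nu>) ^ k)) \<longlonglongrightarrow>
                 - a * mittag_leffler \<nu> (- a * t powr \<nu>)"
      unfolding sums_def[symmetric] by (rule sums_mult)
  qed
qed

section \<open>The extremum principle and fractional relaxation\<close>

text \<open>Integration by parts against the kernel \<open>(t - \<tau>) powr (- \<nu>)\<close>, whose derivative is nonnegative.\<close>

lemma integral_caputo_kernel_lower_bound:
  fixes w w' :: "real \<Rightarrow> real"
  assumes "0 < \<nu>" "0 \<le> b" "b < t"
    and cont: "continuous_on {0..b} w"
    and deriv: "\<And>\<tau>. \<tau> \<in> {0<..<b} \<Longrightarrow> (w has_real_derivative w' \<tau>) (at \<tau>)"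
    and bound: "\<And>\<tau>. \<tau> \<in> {0..b} \<Longrightarrow> w \<tau> \<le> M"
  shows "(w b - M) * (t - b) powr (- \<nu>) + (M - w 0) * t powr (- \<nu>)
           \<le> integral {0..b} (\<lambda>\<tau>. w' \<tau> * (t - \<tau>) powr (- \<nu>))"
proof -
  define k where "k \<tau> = (t - \<tau>) powr (- \<nu>)" for \<tau>
  define k' where "k' \<tau> = \<nu> * (t - \<tau>) powr (- \<nu> - 1)" for \<tau>
  have k: "continuous_on {0..b} k" "continuous_on {0..b} k'"
    unfolding k_def[abs_def] k'_def[abs_def] using assms(3) by (intro continuous_intros; auto)+
  have dk: "(k has_vector_derivative k' \<tau>) (at \<tau>)" if "\<tau> \<in> {0<..<b}" for \<tau>
  proof -
    have "(k has_real_derivative k' \<tau>) (at \<tau>)"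
      using that assms(3) unfolding k_def[abs_def] k'_def
      by (auto intro!: derivative_eq_intros simp: field_simps)
    then show ?thesis by (simp add: has_real_derivative_iff_has_vector_derivative)
  qed
  have dw: "((\<lambda>\<tau>. w \<tau> - M) has_vector_derivative w' \<tau>) (at \<tau>)" if "\<tau> \<in> {0<..<b}" for \<tau>
    using DERIV_diff[OF deriv[OF that] DERIV_const]
    by (simp add: has_real_derivative_iff_has_vector_derivative)
  have cont_M: "continuous_on {0..b} (\<lambda>\<tau>. w \<tau> - M)"
    using cont by (intro continuous_on_diff continuous_on_const)
  have "(\<lambda>\<tau>. (w \<tau> - M) * k' \<tau>) integrable_on {0..b}"
    using cont_M k(2) by (intro integrable_continuous_interval continuous_on_mult)
  then obtain Y where Y: "((\<lambda>\<tau>. (w \<tau> - M) * k' \<tau>) has_integral Y) {0..b}"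
    by (auto simp: integrable_on_def)
  have "Y \<le> 0"
  proof (rule has_integral_le[OF Y, of "\<lambda>_. 0"])
    fix \<tau> assume "\<tau> \<in> {0..b}"
    then have "w \<tau> - M \<le> 0" using bound by simp
    moreover have "0 \<le> k' \<tau>" using assms(1) by (simp add: k'_def)
    ultimately show "(w \<tau> - M) * k' \<tau> \<le> 0" by (rule mult_nonpos_nonneg)
  qed simp
  define y where "y = (w b - M) * k b - (w 0 - M) * k 0 - Y"
  have "((\<lambda>\<tau>. w' \<tau> * k \<tau>) has_integral y) {0..b}"
  proof (rule integration_by_parts_interior[OF bounded_bilinear_mult assms(2) cont_M k(1) dw dk])
    show "((\<lambda>\<tau>. (w \<tau> - M) * k' \<tau>) has_integral (w b - M) * k b - (w 0 - M) * k 0 - y) {0..b}"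
      using Y by (simp add: y_def)
  qed
  then show ?thesis
    using \<open>Y \<le> 0\<close> by (simp add: integral_unique y_def k_def algebra_simps)
qed

lemma tendsto_diff_mult_powr_at_left:
  fixes w :: "real \<Rightarrow> real"
  assumes "w differentiable (at t)" "\<nu> < 1"
  shows "((\<lambda>b. (w b - w t) * (t - b) powr (- \<nu>)) \<longlongrightarrow> 0) (at_left t)"
proof -
  have near: "\<forall>\<^sub>F b in at_left t. b \<in> {t - 1<..<t}"
    by (rule eventually_at_left_real) simp
  have "((\<lambda>b. (w b - w t) / (b - t)) \<longlongrightarrow> deriv w t) (at_left t)"
    using assms(1)
    unfolding DERIV_deriv_iff_real_differentiable[symmetric] has_field_derivative_iff
    by (rule tendsto_within_subset) auto
  moreover have "((\<lambda>b. (t - b) powr (1 - \<nu>)) \<longlongrightarrow> 0) (at_left t)"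
    using assms(2) near
    by (intro tendsto_zero_powrI tendsto_eq_intros) (auto elim: eventually_mono)
  ultimately have "((\<lambda>b. - ((w b - w t) / (b - t)) * (t - b) powr (1 - \<nu>)) \<longlongrightarrow> - deriv w t * 0)
                     (at_left t)"
    by (intro tendsto_intros)
  moreover have "\<forall>\<^sub>F b in at_left t.
      - ((w b - w t) / (b - t)) * (t - b) powr (1 - \<nu>) = (w b - w t) * (t - b) powr (- \<nu>)"
    using near
  proof (rule eventually_mono)
    fix b assume b: "b \<in> {t - 1<..<t}"
    then have eq: "(t - b) powr (1 - \<nu>) = (t - b) * (t - b) powr (- \<nu>)"
      using powr_mult_base[of "t - b" "- \<nu>"] by simp
    show "- ((w b - w t) / (b - t)) * (t - b) powr (1 - \<nu>) = (w b - w t) * (t - b) powr (- \<nu>)"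
      unfolding eq using b by (simp add: field_simps)
  qed
  ultimately show ?thesis by (simp add: tendsto_cong)
qed

text \<open>Luchko's extremum principle for the Caputo derivative.\<close>

lemma caputo_derivative_at_maximum:
  assumes "0 < \<nu>" "\<nu> < 1" "0 < t" and cap: "has_caputo_derivative \<nu> w D t"
    and "w differentiable (at t)"
    and max: "\<And>\<tau>. \<tau> \<in> {0..t} \<Longrightarrow> w \<tau> \<le> w t"
  shows "(w t - w 0) * t powr (- \<nu>) \<le> Gamma (1 - \<nu>) * D"
proof -
  define F where "F \<tau> = deriv w \<tau> * (t - \<tau>) powr (- \<nu>)" for \<tau>
  have "0 < Gamma (1 - \<nu>)" using assms(2) by simp
  have "((\<lambda>\<tau>. Gamma (1 - \<nu>) * (deriv w \<tau> * (t - \<tau>) powr (- \<nu>) / Gamma (1 - \<nu>)))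
          has_integral Gamma (1 - \<nu>) * D) {0..t}"
    using cap unfolding has_caputo_derivative_def by (intro has_integral_mult_right) auto
  then have "(F has_integral Gamma (1 - \<nu>) * D) {0..t}"
    using \<open>0 < Gamma (1 - \<nu>)\<close> by (simp add: F_def[abs_def])
  then have "((\<lambda>b. integral {0..b} F) \<longlongrightarrow> Gamma (1 - \<nu>) * D) (at_left t)"
    using indefinite_integral_continuous_1[of F 0 t] assms(3)
    by (metis continuous_on_Icc_at_leftD has_integral_integrable integral_unique)
  moreover have "((\<lambda>b. (w b - w t) * (t - b) powr (- \<nu>) + (w t - w 0) * t powr (- \<nu>))
                   \<longlongrightarrow> 0 + (w t - w 0) * t powr (- \<nu>)) (at_left t)"
    using assms by (intro tendsto_add tendsto_const tendsto_diff_mult_powr_at_left)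
  moreover have "\<forall>\<^sub>F b in at_left t.
      (w b - w t) * (t - b) powr (- \<nu>) + (w t - w 0) * t powr (- \<nu>) \<le> integral {0..b} F"
    using eventually_at_left_real[OF assms(3)]
  proof (rule eventually_mono)
    fix b assume b: "b \<in> {0<..<t}"
    show "(w b - w t) * (t - b) powr (- \<nu>) + (w t - w 0) * t powr (- \<nu>) \<le> integral {0..b} F"
      unfolding F_def
    proof (rule integral_caputo_kernel_lower_bound[OF assms(1)])
      show "continuous_on {0..b} w"
        using cap b unfolding has_caputo_derivative_def by (auto elim: continuous_on_subset)
      show "(w has_real_derivative deriv w \<tau>) (at \<tau>)" if "\<tau> \<in> {0<..<b}" for \<tau>
        using that b by (intro has_caputo_derivative_imp_DERIV[OF cap]) auto
      show "w \<tau> \<le> w t" if "\<tau> \<in> {0..b}" for \<tau>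
        using that b by (intro max) auto
    qed (use b in auto)
  qed
  ultimately show ?thesis
    by (simp add: tendsto_le[OF trivial_limit_at_left_real])
qed

lemma caputo_relaxation_nonpos:
  assumes "0 < \<nu>" "\<nu> < 1" "0 \<le> c" "w 0 = 0"
    and cap: "\<And>t. 0 < t \<Longrightarrow> has_caputo_derivative \<nu> w (- c * w t) t" and "0 < T"
  shows "w T \<le> 0"
proof (rule ccontr)
  assume "\<not> w T \<le> 0"
  have "continuous_on {0..T} w"
    using cap[OF \<open>0 < T\<close>] unfolding has_caputo_derivative_def by simp
  then obtain t where t: "t \<in> {0..T}" and max: "\<And>\<tau>. \<tau> \<in> {0..T} \<Longrightarrow> w \<tau> \<le> w t"
    using continuous_attains_sup[OF compact_Icc] \<open>0 < T\<close> by (metis atLeastAtMost_iff less_eq_real_def order_refl empty_iff)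
  have "0 < w t"
    using max[of T] \<open>\<not> w T \<le> 0\<close> \<open>0 < T\<close> by auto
  then have "0 < t"
    using t \<open>w 0 = 0\<close> by (cases "t = 0") auto
  have "w differentiable (at t)"
    using has_caputo_derivative_imp_DERIV[OF cap[of "t + 1"], of t] \<open>0 < t\<close>
    by (auto simp: real_differentiable_def)
  then have "(w t - w 0) * t powr (- \<nu>) \<le> Gamma (1 - \<nu>) * (- c * w t)"
    using t max \<open>0 < t\<close> by (intro caputo_derivative_at_maximum cap assms(1,2)) auto
  moreover have "0 \<le> Gamma (1 - \<nu>) * (c * w t)"
    using assms(2,3) \<open>0 < w t\<close> by simp
  moreover have "0 < w t * t powr (- \<nu>)"
    using \<open>0 < w t\<close> \<open>0 < t\<close> by simp
  ultimately show False
    using \<open>w 0 = 0\<close> by simp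
qed

lemma caputo_relaxation_eq_0:
  assumes "0 < \<nu>" "\<nu> < 1" "0 \<le> c" "w 0 = 0"
    and cap: "\<And>t. 0 < t \<Longrightarrow> has_caputo_derivative \<nu> w (- c * w t) t" and "0 < T"
  shows "w T = 0"
proof -
  have "w T \<le> 0"
    using assms by (rule caputo_relaxation_nonpos)
  moreover have "- w T \<le> 0"
  proof (rule caputo_relaxation_nonpos[where w = "\<lambda>x. - w x", OF assms(1-3) _ _ assms(6)])
    show "has_caputo_derivative \<nu> (\<lambda>x. - w x) (- c * - w t) t" if "0 < t" for t
      using has_caputo_derivative_cmult[OF cap[OF that], of "- 1"] by simp
  qed (use assms(4) in simp)
  ultimately show ?thesis by simp
qed

lemma caputo_zero_imp_constant:
  assumes "0 < \<nu>" "\<nu> < 1" and cap: "\<And>t. 0 < t \<Longrightarrow> has_caputo_derivative \<nu> f 0 t" and "0 < T"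
  shows "f T = f 0"
proof -
  have "has_caputo_derivative \<nu> (\<lambda>x. f x + - f 0) (- 0 * (f t + - f 0)) t" if "0 < t" for t
    using has_caputo_derivative_add[OF cap[OF that] has_caputo_derivative_const[of \<nu> "- f 0" t]]
    by simp
  from caputo_relaxation_eq_0[OF assms(1,2) order_refl _ this assms(4)] show ?thesis
    by simp
qed

lemma caputo_relaxation_solution:
  assumes "0 < \<nu>" "\<nu> < 1" "0 < c"
    and cap: "\<And>t. 0 < t \<Longrightarrow> has_caputo_derivative \<nu> f (b - c * f t) t" and "0 < r"
  shows "f r = b / c + (f 0 - b / c) * mittag_leffler \<nu> (- c * r powr \<nu>)"
proof -
  define g where "g x = b / c + (f 0 - b / c) * mittag_leffler \<nu> (- c * x powr \<nu>)" for x
  have cap_diff: "has_caputo_derivative \<nu> (\<lambda>x. f x + - 1 * g x) (- c * (f t + - 1 * g t)) t"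
    if "0 < t" for t
  proof -
    have "has_caputo_derivative \<nu> (\<lambda>x. mittag_leffler \<nu> (- c * x powr \<nu>))
            (- c * mittag_leffler \<nu> (- c * t powr \<nu>)) t"
      using assms(1,2) that by (rule has_caputo_derivative_mittag_leffler)
    from has_caputo_derivative_add[OF has_caputo_derivative_const[of \<nu> "b / c" t]
        has_caputo_derivative_cmult[OF this, of "f 0 - b / c"]]
    have "has_caputo_derivative \<nu> g (0 + (f 0 - b / c) * (- c * mittag_leffler \<nu> (- c * t powr \<nu>))) t"
      unfolding g_def[abs_def] .
    from has_caputo_derivative_add[OF cap[OF that] has_caputo_derivative_cmult[OF this, of "- 1"]]
    have "has_caputo_derivative \<nu> (\<lambda>x. f x + - 1 * g x)
            (b - c * f t + - 1 * (0 + (f 0 - b / c) * (- c * mittag_leffler \<nu> (- c * t powr \<nu>)))) t" .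
    moreover have "b - c * f t + - 1 * (0 + (f 0 - b / c) * (- c * mittag_leffler \<nu> (- c * t powr \<nu>)))
                     = - c * (f t + - 1 * g t)"
      using assms(3) by (simp add: g_def field_simps)
    ultimately show ?thesis by simp
  qed
  have "f 0 + - 1 * g 0 = 0"
    by (simp add: g_def)
  from caputo_relaxation_eq_0[where w = "\<lambda>x. f x + - 1 * g x", OF assms(1,2) less_imp_le[OF assms(3)] this cap_diff assms(5)]
  show ?thesis
    by (simp add: g_def)
qed

section \<open>Moments of the binomial distribution\<close>

lemma binom_limit_sum: "(\<Sum>k\<le>N. binom_limit N x k) = 1"
  using binomial_ring[of x "1 - x" N] by (simp add: binom_limit_def mult_ac)

lemma Suc_mult_binom_limit_Suc:
  "real (Suc j) * binom_limit (Suc N) x (Suc j) = real (Suc N) * x * binom_limit N x j"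
proof -
  have "real (Suc j) * real (Suc N choose Suc j) = real (Suc N) * real (N choose j)"
    using Suc_times_binomial[of j N] by (metis of_nat_mult)
  then show ?thesis
    unfolding binom_limit_def by (simp add: mult_ac)
qed

lemma binom_limit_mean: "(\<Sum>k\<le>N. real k * binom_limit N x k) = real N * x"
proof (cases N)
  case (Suc M)
  have "(\<Sum>k\<le>Suc M. real k * binom_limit (Suc M) x k)
          = (\<Sum>j\<le>M. real (Suc j) * binom_limit (Suc M) x (Suc j))"
    by (subst sum.atMost_Suc_shift) simp
  also have "\<dots> = (\<Sum>j\<le>M. real (Suc M) * x * binom_limit M x j)"
    by (simp only: Suc_mult_binom_limit_Suc)
  also have "\<dots> = real (Suc M) * x"
    by (simp add: sum_distrib_left[symmetric] binom_limit_sum)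
  finally show ?thesis using Suc by simp
qed simp

lemma binom_limit_second_moment:
  "(\<Sum>k\<le>N. real k * real k * binom_limit N x k) = real N * x * (1 - x) + (real N * x)\<^sup>2"
proof (cases N)
  case (Suc M)
  have "(\<Sum>k\<le>Suc M. real k * real k * binom_limit (Suc M) x k)
          = (\<Sum>j\<le>M. real (Suc j) * (real (Suc j) * binom_limit (Suc M) x (Suc j)))"
    by (subst sum.atMost_Suc_shift) (simp add: mult.assoc)
  also have "\<dots> = (\<Sum>j\<le>M. real (Suc M) * x * (real j * binom_limit M x j + binom_limit M x j))"
    by (simp only: Suc_mult_binom_limit_Suc) (simp add: algebra_simps)
  also have "\<dots> = real (Suc M) * x * (real M * x + 1)"
    by (simp add: sum_distrib_left[symmetric] sum.distrib binom_limit_sum binom_limit_mean)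
  finally show ?thesis using Suc by (simp add: algebra_simps power2_eq_square)
qed simp

section \<open>Moments of the fractional binomial process\<close>

lemma sum_atMost_shift_next:
  fixes f :: "nat \<Rightarrow> 'a::ab_group_add"
  shows "(\<Sum>n\<le>N. if n < N then f (Suc n) else 0) = (\<Sum>n\<le>N. f n) - f 0"
proof -
  have "(\<Sum>n\<le>N. if n < N then f (Suc n) else 0) = (\<Sum>n<N. f (Suc n))"
    by (simp add: lessThan_Suc_atMost[symmetric])
  also have "\<dots> = (\<Sum>n\<le>N. f n) - f 0"
    by (simp add: sum.atMost_shift)
  finally show ?thesis .
qed

lemma sum_atMost_shift_prev:
  fixes g :: "nat \<Rightarrow> 'a::ab_group_add"
  shows "(\<Sum>n\<le>N. if 0 < n then g (n - 1) else 0) = (\<Sum>n\<le>N. g n) - g N"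
proof -
  have "(\<Sum>n\<le>N. if 0 < n then g (n - 1) else 0) = (\<Sum>n<N. g n)"
    by (simp add: sum.atMost_shift)
  also have "\<dots> = (\<Sum>n\<le>N. g n) - g N"
    by (simp add: lessThan_Suc_atMost[symmetric])
  finally show ?thesis .
qed

text \<open>Summing the forward equations against a weight \<open>\<phi>\<close> moves the generator onto \<open>\<phi>\<close>.\<close>

lemma sum_mult_fbp_rhs:
  "(\<Sum>n\<le>N. \<phi> n * fbp_rhs lam mu N p n t) =
     (\<Sum>n\<le>N. (mu * real n * (\<phi> (n - 1) - \<phi> n) + lam * real (N - n) * (\<phi> (Suc n) - \<phi> n)) * p n t)"
proof -
  define f where "f j = \<phi> (j - 1) * (mu * real j * p j t)" for j
  define g where "g j = \<phi> (Suc j) * (lam * real (N - j) * p j t)" for j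
  have death: "(\<Sum>n\<le>N. \<phi> n * (if n < N then mu * real (n + 1) * p (n + 1) t else 0))
                 = (\<Sum>n\<le>N. f n)"
  proof -
    have "(\<Sum>n\<le>N. \<phi> n * (if n < N then mu * real (n + 1) * p (n + 1) t else 0))
            = (\<Sum>n\<le>N. if n < N then f (Suc n) else 0)"
      by (intro sum.cong) (auto simp: f_def)
    then show ?thesis
      using sum_atMost_shift_next[where N = N and f = f] by (simp add: f_def)
  qed
  have birth: "(\<Sum>n\<le>N. \<phi> n * (if 0 < n then lam * real (N - n + 1) * p (n - 1) t else 0))
                 = (\<Sum>n\<le>N. g n)"
  proof -
    have "(\<Sum>n\<le>N. \<phi> n * (if 0 < n then lam * real (N - n + 1) * p (n - 1) t else 0))
            = (\<Sum>n\<le>N. if 0 < n then g (n - 1) else 0)"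
      by (intro sum.cong) (auto simp: g_def Suc_diff_le)
    then show ?thesis
      using sum_atMost_shift_prev[where N = N and g = g] by (simp add: g_def)
  qed
  have "(\<Sum>n\<le>N. \<phi> n * fbp_rhs lam mu N p n t)
          = (\<Sum>n\<le>N. \<phi> n * (if n < N then mu * real (n + 1) * p (n + 1) t else 0))
            - (\<Sum>n\<le>N. \<phi> n * (mu * real n * p n t)) - (\<Sum>n\<le>N. \<phi> n * (lam * real (N - n) * p n t))
            + (\<Sum>n\<le>N. \<phi> n * (if 0 < n then lam * real (N - n + 1) * p (n - 1) t else 0))"
    by (simp add: fbp_rhs_def sum.distrib sum_subtractf algebra_simps)
  also have "\<dots> = (\<Sum>n\<le>N. f n - \<phi> n * (mu * real n * p n t) - \<phi> n * (lam * real (N - n) * p n t) + g n)"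
    by (simp add: death birth sum.distrib sum_subtractf)
  finally show ?thesis
    by (simp add: f_def g_def algebra_simps)
qed

lemma has_caputo_derivative_fbp_moment:
  assumes "fbp_state_probs lam mu N \<nu> m p" "0 < t"
  shows "has_caputo_derivative \<nu> (\<lambda>x. \<Sum>n\<le>N. \<phi> n * p n x)
           (\<Sum>n\<le>N. (mu * real n * (\<phi> (n - 1) - \<phi> n) + lam * real (N - n) * (\<phi> (Suc n) - \<phi> n))
                     * p n t) t"
proof -
  have "has_caputo_derivative \<nu> (\<lambda>x. \<Sum>n\<le>N. \<phi> n * p n x) (\<Sum>n\<le>N. \<phi> n * fbp_rhs lam mu N p n t) t"
    using assms unfolding fbp_state_probs_def
    by (intro has_caputo_derivative_sum has_caputo_derivative_cmult) auto
  then show ?thesis by (simp only: sum_mult_fbp_rhs)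
qed

lemma fbp_initial_moment:
  assumes "fbp_state_probs lam mu N \<nu> m p" "m \<le> N"
  shows "(\<Sum>n\<le>N. \<phi> n * p n 0) = \<phi> m"
proof -
  have "(\<Sum>n\<le>N. \<phi> n * p n 0) = (\<Sum>n\<le>N. if n = m then \<phi> m else 0)"
    using assms(1) unfolding fbp_state_probs_def by (intro sum.cong) auto
  then show ?thesis using assms(2) by simp
qed

lemma fbp_total_mass:
  assumes "0 < \<nu>" "\<nu> < 1" "fbp_state_probs lam mu N \<nu> m p" "m \<le> N" "0 < r"
  shows "(\<Sum>n\<le>N. p n r) = 1"
proof -
  have "has_caputo_derivative \<nu> (\<lambda>x. \<Sum>n\<le>N. 1 * p n x) 0 t" if "0 < t" for t
    using has_caputo_derivative_fbp_moment[OF assms(3) that, of "\<lambda>_. 1"] by simp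
  from caputo_zero_imp_constant[OF assms(1,2) this assms(5)] show ?thesis
    using fbp_initial_moment[OF assms(3,4), of "\<lambda>_. 1"] by simp
qed

lemma fbp_mean:
  assumes "0 < \<nu>" "\<nu> < 1" "0 < lam + mu" "fbp_state_probs lam mu N \<nu> m p" "m \<le> N" "0 < r"
  shows "(\<Sum>n\<le>N. real n * p n r) = real N * (lam / (lam + mu))
           + (real m - real N * (lam / (lam + mu))) * mittag_leffler \<nu> (- (lam + mu) * r powr \<nu>)"
proof -
  have "has_caputo_derivative \<nu> (\<lambda>x. \<Sum>n\<le>N. real n * p n x)
          (lam * real N - (lam + mu) * (\<Sum>n\<le>N. real n * p n t)) t" if "0 < t" for t
  proof -
    have "(\<Sum>n\<le>N. (mu * real n * (real (n - 1) - real n) + lam * real (N - n) * (real (Suc n) - real n))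
                    * p n t)
            = (\<Sum>n\<le>N. lam * real N * p n t - (lam + mu) * (real n * p n t))"
    proof (intro sum.cong refl)
      fix n assume "n \<in> {..N}"
      then show "(mu * real n * (real (n - 1) - real n) + lam * real (N - n) * (real (Suc n) - real n))
                   * p n t = lam * real N * p n t - (lam + mu) * (real n * p n t)"
        by (cases n) (auto simp: algebra_simps)
    qed
    also have "\<dots> = lam * real N - (lam + mu) * (\<Sum>n\<le>N. real n * p n t)"
      using fbp_total_mass[OF assms(1,2,4,5) that]
      by (simp add: sum_subtractf sum_distrib_left[symmetric])
    finally show ?thesis
      using has_caputo_derivative_fbp_moment[OF assms(4) that, of real] by simp
  qed
  from caputo_relaxation_solution[OF assms(1-3) this assms(6)] show ?thesis
    using fbp_initial_moment[OF assms(4,5), of real] by (simp add: ac_simps)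
qed

theorem mainTheorem2:
  fixes lam mu \<nu> s t :: real and N M :: nat
    and P0 :: "nat \<Rightarrow> nat \<Rightarrow> real \<Rightarrow> real"
  assumes "lam > 0" and "mu > 0" and "1 \<le> M" and "M \<le> N"
    and "0 < \<nu>" and "\<nu> < 1"
    and "\<And>m. m \<le> N \<Longrightarrow> fbp_state_probs lam mu N \<nu> m (P0 m)"
    and "0 < s" and "s < t"
  shows "fbp_mixed_moment N (lam / (lam + mu)) P0 s t =
           (real N * (lam / (lam + mu)))^2
           - real N * (lam / (lam + mu)) * (lam / (lam + mu) - 1)
             * mittag_leffler \<nu> (- (lam + mu) * (t - s) powr \<nu>)"
proof -
  define \<xi> where "\<xi> = lam / (lam + mu)"
  define E where "E = mittag_leffler \<nu> (- (lam + mu) * (t - s) powr \<nu>)"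
  have mean: "(\<Sum>k\<le>N. real k * P0 n k (t - s)) = real N * \<xi> + (real n - real N * \<xi>) * E"
    if "n \<le> N" for n
    unfolding \<xi>_def E_def using assms that by (intro fbp_mean) auto
  \<comment> \<open>\<open>M\<close> does not enter: the law of the process at time \<open>s\<close> is taken to be binomial.\<close>
  have "fbp_mixed_moment N \<xi> P0 s t
          = (\<Sum>n\<le>N. real n * binom_limit N \<xi> n * (\<Sum>k\<le>N. real k * P0 n k (t - s)))"
    unfolding fbp_mixed_moment_def by (simp add: sum_distrib_left mult_ac)
  also have "\<dots> = (\<Sum>n\<le>N. real n * binom_limit N \<xi> n * (real N * \<xi> + (real n - real N * \<xi>) * E))"
    by (intro sum.cong) (simp_all add: mean)
  also have "\<dots> = real N * \<xi> * (1 - E) * (\<Sum>n\<le>N. real n * binom_limit N \<xi> n)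
                   + E * (\<Sum>n\<le>N. real n * real n * binom_limit N \<xi> n)"
  proof -
    have "(\<Sum>n\<le>N. real n * binom_limit N \<xi> n * (real N * \<xi> + (real n - real N * \<xi>) * E))
        = (\<Sum>n\<le>N. real N * \<xi> * (1 - E) * (real n * binom_limit N \<xi> n)
                     + E * (real n * real n * binom_limit N \<xi> n))"
      by (intro sum.cong) (auto simp: algebra_simps)
    then show ?thesis
      by (simp only: sum.distrib sum_distrib_left)
  qed
  also have "\<dots> = (real N * \<xi>)\<^sup>2 - real N * \<xi> * (\<xi> - 1) * E"
    by (simp only: binom_limit_mean binom_limit_second_moment) (simp add: algebra_simps power2_eq_square)
  finally show ?thesis
    unfolding \<xi>_def E_def .
qed

end
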